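(* Let $p\ge 2$ and let $\mathbf{x}_1,\dots,\mathbf{x}_p\in\mathbb{R}^n$ be vectors such that each has mean zero, $\bar{x}_i=\frac1n\sum_{k=1}^n x_{ki}=0$, and unit Euclidean length, $\|\mathbf{x}_i\|=1$, for $i=1,\dots,p$. Suppose $$|\mathrm{corr}(\mathbf{x}_i,\mathbf{x}_1)|>\frac{\sqrt{2}}{2}\qquad\text{for } i=2,3,\dots,p.$$ Then, among the $2^p$ sets of size $p$ formed by choosing exactly one element from $\{\mathbf{x}_j,-\mathbf{x}_j\}$ for each $j=1,2,\dots,p$, there exists a set in which every pair of (distinct) vectors has a positive correlation.
   Context: Here $\mathrm{corr}(\mathbf{u},\mathbf{v})$ denotes the sample (Pearson) correlation coefficient of two vectors $\mathbf{u},\mathbf{v}\in\mathbb{R}^n$; for vectors with mean zero and unit length it equals the inner product $\mathbf{u}\cdot\mathbf{v}$. *)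

theory Defs
  imports "HOL-Analysis.Analysis"
begin

definition sample_mean :: "real ^ 'n \<Rightarrow> real" where
  "sample_mean u = (\<Sum>k\<in>UNIV. u $ k) / real CARD('n)"

definition corr :: "real ^ 'n \<Rightarrow> real ^ 'n \<Rightarrow> real" where
  "corr u v =
     (\<Sum>k\<in>UNIV. (u $ k - sample_mean u) * (v $ k - sample_mean v)) /
     sqrt ((\<Sum>k\<in>UNIV. (u $ k - sample_mean u)^2) * (\<Sum>k\<in>UNIV. (v $ k - sample_mean v)^2))"

end

theory Submission
  imports Defs
begin

text \<open>Orient each vector so that it correlates positively with \<open>x\<^sub>1\<close>. For centred unit vectors
  correlation is the inner product, so all oriented vectors have inner product \<open>> \<surd>2/2\<close> with
  \<open>x\<^sub>1\<close>, i.e. lie within angle \<open>\<pi>/4\<close> of it; any two of them then lie within a right angle of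
  each other.\<close>

lemma sample_mean_scaleR: "sample_mean (c *\<^sub>R (u :: real ^ 'n)) = c * sample_mean u"
  by (simp add: sample_mean_def sum_distrib_left)

lemma corr_eq_inner_if_centered_unit:
  fixes u v :: "real ^ 'n"
  assumes "sample_mean u = 0" "sample_mean v = 0" "norm u = 1" "norm v = 1"
  shows "corr u v = u \<bullet> v"
proof -
  have "u \<bullet> u = 1" "v \<bullet> v = 1"
    using assms by (simp_all flip: power2_norm_eq_inner)
  then show ?thesis
    using assms by (simp add: corr_def inner_vec_def power2_eq_square)
qed

lemma inner_pos_if_close_to_common_unit:
  fixes u v w :: "'a :: real_inner"
  assumes "norm u = 1" "norm v = 1" "norm w = 1"
    and uw: "u \<bullet> w > sqrt 2 / 2" and vw: "v \<bullet> w > sqrt 2 / 2"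
  shows "u \<bullet> v > 0"
proof -
  define a b where "a = u \<bullet> w" and "b = v \<bullet> w"
  define u' v' where "u' = u - a *\<^sub>R w" and "v' = v - b *\<^sub>R w"
  have unit: "u \<bullet> u = 1" "v \<bullet> v = 1" "w \<bullet> w = 1"
    using assms by (simp_all flip: power2_norm_eq_inner)
  have "u \<bullet> v = a * b + u' \<bullet> v'"
    and "(u' + v') \<bullet> (u' + v') = 2 - a\<^sup>2 - b\<^sup>2 + 2 * (u' \<bullet> v')"
    using unit unfolding u'_def v'_def a_def b_def
    by (simp_all add: inner_diff_left inner_diff_right inner_add_left inner_add_right
        inner_commute power2_eq_square algebra_simps)
  \<comment> \<open>the components orthogonal to \<open>w\<close> contribute at least \<open>-(1 - a\<^sup>2 + 1 - b\<^sup>2)/2\<close>\<close>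
  then have "2 * (u \<bullet> v) \<ge> (a + b)\<^sup>2 - 2"
    using inner_ge_zero[of "u' + v'"] by (simp add: power2_eq_square algebra_simps)
  moreover have "(a + b)\<^sup>2 > (sqrt 2)\<^sup>2"
    using uw vw unfolding a_def b_def
    by (intro power_strict_mono) (auto simp: add_pos_pos)
  ultimately show ?thesis by simp
qed

theorem theorem1:
  fixes p :: nat and x :: "nat \<Rightarrow> real ^ 'n"
  assumes "p \<ge> 2"
    and "\<And>i. i \<in> {1..p} \<Longrightarrow> sample_mean (x i) = 0"
    and "\<And>i. i \<in> {1..p} \<Longrightarrow> norm (x i) = 1"
    and "\<And>i. i \<in> {2..p} \<Longrightarrow> \<bar>corr (x i) (x 1)\<bar> > sqrt 2 / 2"
  shows "\<exists>s :: nat \<Rightarrow> real. (\<forall>j\<in>{1..p}. s j \<in> {1, -1}) \<and>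
           (\<forall>i\<in>{1..p}. \<forall>j\<in>{1..p}. i \<noteq> j \<longrightarrow> corr (s i *\<^sub>R x i) (s j *\<^sub>R x j) > 0)"
proof -
  define s :: "nat \<Rightarrow> real" where "s i = (if x i \<bullet> x 1 \<ge> 0 then 1 else -1)" for i
  have one: "1 \<in> {1..p}" using assms(1) by simp
  have centered: "sample_mean (s i *\<^sub>R x i) = 0" and unit: "norm (s i *\<^sub>R x i) = 1"
    if "i \<in> {1..p}" for i
    using assms(2,3)[OF that] by (simp_all add: sample_mean_scaleR s_def)
  have close: "(s i *\<^sub>R x i) \<bullet> x 1 > sqrt 2 / 2" if i: "i \<in> {1..p}" for i
  proof (cases "i = 1")
    case True
    have "sqrt 2 < sqrt (4 :: real)" by (simp only: real_sqrt_less_iff)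
    then have "sqrt 2 / 2 < (1 :: real)" by (simp add: real_sqrt_four)
    then show ?thesis
      using True assms(3)[OF one] by (simp add: s_def flip: power2_norm_eq_inner)
  next
    case False
    then have "i \<in> {2..p}" using i by auto
    note assms(4)[OF this]
    moreover have "(s i *\<^sub>R x i) \<bullet> x 1 = \<bar>x i \<bullet> x 1\<bar>"
      by (simp add: s_def)
    ultimately show ?thesis
      using corr_eq_inner_if_centered_unit[OF assms(2)[OF i] assms(2)[OF one]
          assms(3)[OF i] assms(3)[OF one]]
      by simp
  qed
  have "corr (s i *\<^sub>R x i) (s j *\<^sub>R x j) > 0" if "i \<in> {1..p}" "j \<in> {1..p}" for i j
    using inner_pos_if_close_to_common_unit[OF unit unit assms(3)[OF one] close close]
      corr_eq_inner_if_centered_unit[OF centered centered unit unit] that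
    by simp
  then show ?thesis by (intro exI[of _ s]) (auto simp: s_def)
qed

end
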